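(* Let $a\in\mathbb{N}$ and $X=\overline{a^{\mathbb{N}}}$ (closure in the $2$-adic topology on $\mathbb{N}\setminus2\mathbb{N}$). (1) If $a\in1+4\mathbb{N}$, then $X=1+2^{n(X)-2}\mathbb{N}_0$. (2) If $a\in3+4\mathbb{N}$, then $X=(1+2^{n(X)-1}\mathbb{N}_0)\cup(-1+2^{n(X)-2}+2^{n(X)-1}\mathbb{N}_0)$. In both cases $i(X)=2^{n(X)-3}$.
   Context: $\mathbb{N}=\{1,2,\dots\}$, $\mathbb{N}_0=\{0\}\cup\mathbb{N}$, $x^{\mathbb{N}}=\{x^k:k\in\mathbb{N}\}$, $c+d\mathbb{N}=\{c+dk:k\in\mathbb{N}\}$, $c+d\mathbb{N}_0=\{c+dk:k\in\mathbb{N}_0\}$. The $2$-adic topology on $\mathbb{N}\setminus2\mathbb{N}$ is generated by the sets $x+2^m\mathbb{N}_0$ ($x,m\in\mathbb{N}$). $\mathbb{Z}_{2^m}^\times$ is the unit group of $\mathbb{Z}/2^m\mathbb{Z}$, $\pi_m:\mathbb{N}\to\mathbb{Z}/2^m\mathbb{Z}$, $x\mapsto x+2^m\mathbb{Z}$. For $X$ of the form $\overline{b^{\mathbb{N}}}$ with $b$ odd, $b\neq 1$: $n(X)=\min\{m\in\mathbb{N}:X=\pi_m^{-1}(\pi_m(X)),\ |\pi_m(X)|\ge3\}$, and $i(X)$ is the index of the subgroup $\pi_{n(X)}(X)$ in $\mathbb{Z}_{2^{n(X)}}^\times$. *)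

theory Defs
  imports Main
begin

text \<open>The natural numbers of the paper are N = {1,2,...}; we use Isabelle's nat
  and add the positivity constraints explicitly.\<close>

text \<open>Closure of S in the 2-adic topology on the odd positive integers, whose
  basis consists of the sets x + 2^m N_0 (x, m in N), intersected with the odd numbers:
  y is in the closure iff y is odd and every basic open set containing y meets S.\<close>
definition adic_closure :: "nat set \<Rightarrow> nat set" where
  "adic_closure S = {y. y \<ge> 1 \<and> odd y \<and>
     (\<forall>x m. x \<ge> 1 \<longrightarrow> m \<ge> 1 \<longrightarrow> y \<in> {x + 2^m * k | k. True} \<longrightarrow>
        (\<exists>s\<in>S. s \<in> {x + 2^m * k | k. True}))}"

definition pi2 :: "nat \<Rightarrow> nat \<Rightarrow> nat" where
  "pi2 m x = x mod 2^m"

definition pi2_sat :: "nat \<Rightarrow> nat set \<Rightarrow> nat set" where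
  "pi2_sat m X = {y. y \<ge> 1 \<and> pi2 m y \<in> pi2 m ` X}"

definition nX :: "nat set \<Rightarrow> nat" where
  "nX X = (LEAST m. m \<ge> 1 \<and> X = pi2_sat m X \<and> card (pi2 m ` X) \<ge> 3)"

definition units2 :: "nat \<Rightarrow> nat set" where
  "units2 m = {u. u < 2^m \<and> coprime u (2^m)}"

definition iX :: "nat set \<Rightarrow> nat" where
  "iX X = card (units2 (nX X)) div card (pi2 (nX X) ` X)"

end

(* Write a^2 = 1 + 2^v u with u odd and v >= 2.  Squaring 1 + 2^v u yields 1 + 2^(v+1) u'
   with u' odd, so the powers of b = a^2 can be steered one binary digit at a time onto any
   y = 1 (mod 2^v), modulo every 2^M.  Hence the even powers of a are dense in 1 + 2^v N_0,
   the odd ones in a + 2^v N_0, and X is the preimage of {1, a mod 2^v} under pi_v.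
   For a = 1 + 2^(v-1) * odd the two classes merge into 1 + 2^(v-1) N_0; for
   a = 2^(v-1) * odd - 1 they are 1 and 2^(v-1) - 1.  Either way pi_v(X) has two
   elements and pi_(v+1)(X) four, so n(X) = v + 1 and i(X) = 2^v / 4. *)

theory Submission
  imports Defs "HOL-Number_Theory.Number_Theory"
begin

definition pi2_preimage :: "nat \<Rightarrow> nat set \<Rightarrow> nat set" where
  "pi2_preimage m R = {y. y \<ge> 1 \<and> pi2 m y \<in> R}"

lemma pi2_pi2: "v \<le> m \<Longrightarrow> pi2 v (pi2 m y) = pi2 v y"
  by (simp add: pi2_def mod_exp_eq min_absorb2)

lemma pi2_less: "pi2 m y < 2 ^ m"
  by (simp add: pi2_def)

lemma pi2_sat_pi2_preimage:
  assumes "v \<le> m"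
  shows "pi2_sat m (pi2_preimage v R) = pi2_preimage v R"
  using assms by (auto simp: pi2_sat_def pi2_preimage_def) (metis pi2_pi2)

lemma pi2_image_pi2_preimage:
  assumes "v \<le> m"
  shows "pi2 m ` pi2_preimage v R = {z. z < 2 ^ m \<and> pi2 v z \<in> R}"
proof (intro equalityI subsetI)
  fix z assume "z \<in> pi2 m ` pi2_preimage v R"
  then show "z \<in> {z. z < 2 ^ m \<and> pi2 v z \<in> R}"
    using assms by (auto simp: pi2_preimage_def pi2_pi2 pi2_less)
next
  fix z assume z: "z \<in> {z. z < 2 ^ m \<and> pi2 v z \<in> R}"
  have "pi2 m (z + 2 ^ m) = z" "pi2 v (z + 2 ^ m) = pi2 v z"
    using z pi2_pi2[OF assms, of "z + 2 ^ m"] by (simp_all add: pi2_def)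
  then show "z \<in> pi2 m ` pi2_preimage v R"
    using z by (auto simp: pi2_preimage_def intro!: image_eqI[of _ _ "z + 2 ^ m"])
qed

lemma pi2_image_pi2_preimage_self:
  assumes "R \<subseteq> {..<2 ^ v}"
  shows "pi2 v ` pi2_preimage v R = R"
  unfolding pi2_image_pi2_preimage[OF order_refl] using assms by (auto simp: pi2_def)

lemma card_pi2_image_pi2_preimage_Suc:
  assumes "R \<subseteq> {..<2 ^ v}"
  shows "card (pi2 (Suc v) ` pi2_preimage v R) = 2 * card R"
proof -
  have "pi2 (Suc v) ` pi2_preimage v R = R \<union> (\<lambda>r. r + 2 ^ v) ` R"
    unfolding pi2_image_pi2_preimage[OF le_SucI[OF order_refl]]
  proof (intro equalityI subsetI)
    fix z assume z: "z \<in> {z. z < 2 ^ Suc v \<and> pi2 v z \<in> R}"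
    show "z \<in> R \<union> (\<lambda>r. r + 2 ^ v) ` R"
    proof (cases "z < 2 ^ v")
      case True
      then show ?thesis
        using z by (simp add: pi2_def)
    next
      case False
      define r where "r = z - 2 ^ v"
      have z_eq: "z = r + 2 ^ v"
        using False by (simp add: r_def)
      then have "r < 2 ^ v"
        using z by simp
      then have "pi2 v z = r"
        by (simp add: z_eq pi2_def)
      then have "r \<in> R"
        using z by simp
      then show ?thesis
        using z_eq by blast
    qed
  next
    fix z assume "z \<in> R \<union> (\<lambda>r. r + 2 ^ v) ` R"
    then show "z \<in> {z. z < 2 ^ Suc v \<and> pi2 v z \<in> R}"
      using assms by (auto simp: pi2_def)
  qed
  moreover have "R \<inter> (\<lambda>r. r + 2 ^ v) ` R = {}"
    using assms by auto
  moreover have "finite R"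
    using assms finite_subset by blast
  ultimately show ?thesis
    by (simp add: card_Un_disjoint card_image)
qed

lemma card_pi2_image_mono:
  assumes "m \<le> n"
  shows "card (pi2 m ` X) \<le> card (pi2 n ` X)"
proof -
  have "pi2 m ` X = pi2 m ` pi2 n ` X"
    using assms by (auto simp: image_image pi2_pi2)
  moreover have "finite (pi2 n ` X)"
    by (rule finite_subset[of _ "{..<2 ^ n}"]) (auto simp: pi2_less)
  ultimately show ?thesis
    by (simp add: card_image_le)
qed

lemma nX_eqI:
  assumes "n \<ge> 1" "X = pi2_sat n X" "card (pi2 n ` X) \<ge> 3" "card (pi2 (n - 1) ` X) < 3"
  shows "nX X = n"
  unfolding nX_def
proof (rule Least_equality)
  fix m assume "m \<ge> 1 \<and> X = pi2_sat m X \<and> 3 \<le> card (pi2 m ` X)"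
  then have "3 \<le> card (pi2 m ` X)"
    by blast
  show "n \<le> m"
  proof (rule ccontr)
    assume "\<not> n \<le> m"
    then have "card (pi2 m ` X) \<le> card (pi2 (n - 1) ` X)"
      by (intro card_pi2_image_mono) simp
    with assms(4) \<open>3 \<le> card (pi2 m ` X)\<close> show False
      by simp
  qed
qed (use assms in auto)

lemma card_units2:
  assumes "n \<ge> 1"
  shows "card (units2 n) = 2 ^ (n - 1)"
proof -
  have "units2 n = totatives (2 ^ n)"
    using assms by (auto simp: units2_def totatives_def order_le_less intro: Nat.gr0I)
  then show ?thesis
    using totient_prime_power[of 2 n] assms by (simp add: totient_def)
qed

lemma nX_iX_pi2_preimage_pair:
  assumes "v \<ge> 2" "r < 2 ^ v" "r \<noteq> 1"
  shows "nX (pi2_preimage v {1, r}) = v + 1" "iX (pi2_preimage v {1, r}) = 2 ^ (v - 2)"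
proof -
  let ?X = "pi2_preimage v {1, r}"
  have R: "{1, r} \<subseteq> {..<2 ^ v}"
    using assms one_less_power[of "2::nat" v] by auto
  have "card (pi2 (v + 1) ` ?X) = 4"
    using card_pi2_image_pi2_preimage_Suc[OF R] assms(3) by simp
  moreover have "card (pi2 (v + 1 - 1) ` ?X) = 2"
    using pi2_image_pi2_preimage_self[OF R] assms(3) by simp
  moreover have "?X = pi2_sat (v + 1) ?X"
    by (simp add: pi2_sat_pi2_preimage)
  ultimately show n: "nX ?X = v + 1"
    by (intro nX_eqI) simp_all
  have "iX ?X = 2 ^ v div 4"
    unfolding iX_def n using card_units2[of "v + 1"] \<open>card (pi2 (v + 1) ` ?X) = 4\<close> by simp
  also have "\<dots> = 2 ^ (v - 2)"
    using assms(1) by (simp add: power_diff)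
  finally show "iX ?X = 2 ^ (v - 2)" .
qed

lemma square_one_plus_pow2:
  fixes u v :: nat
  assumes "v \<ge> 2" "odd u"
  shows "\<exists>u'. odd u' \<and> (1 + 2 ^ v * u) ^ 2 = 1 + 2 ^ Suc v * u'"
proof -
  define w where "w = v - 2"
  have v: "v = w + 2"
    using assms(1) by (simp add: w_def)
  have "(1 + 2 ^ v * u) ^ 2 = 1 + 2 ^ Suc v * (u + 2 ^ (w + 1) * u ^ 2)"
    by (simp add: v power2_eq_square power_add algebra_simps)
  moreover have "odd (u + 2 ^ (w + 1) * u ^ 2)"
    using assms(2) by simp
  ultimately show ?thesis
    by blast
qed

lemma power_pow2_one_plus_pow2:
  fixes u v :: nat
  assumes "v \<ge> 2" "odd u"
  shows "\<exists>u'. odd u' \<and> (1 + 2 ^ v * u) ^ (2 ^ d) = 1 + 2 ^ (v + d) * u'"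
proof (induction d)
  case 0
  show ?case
    using assms(2) by auto
next
  case (Suc d)
  then obtain u' where u': "odd u'" "(1 + 2 ^ v * u) ^ (2 ^ d) = 1 + 2 ^ (v + d) * u'"
    by blast
  have "(1 + 2 ^ v * u) ^ (2 ^ Suc d) = ((1 + 2 ^ v * u) ^ (2 ^ d)) ^ 2"
    by (simp add: power_mult[symmetric] mult.commute)
  then show ?case
    using square_one_plus_pow2[of "v + d" u'] assms(1) u' by simp
qed

lemma square_pred_pow2:
  fixes a u v :: nat
  assumes "a + 1 = 2 ^ v * u" "v \<ge> 2" "odd u"
  shows "\<exists>u'. odd u' \<and> a ^ 2 = 1 + 2 ^ Suc v * u'"
proof -
  define w where "w = v - 2"
  have v: "v = w + 2"
    using assms(2) by (simp add: w_def)
  define u' where "u' = u * (2 ^ (w + 1) * u - 1)"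
  have pos: "1 \<le> 2 ^ (w + 1) * u"
    using assms(3) by (simp add: Suc_leI odd_pos)
  have "int a = 2 ^ v * int u - 1"
    using arg_cong[OF assms(1), of int] by simp
  then have "int (a ^ 2) = (2 ^ v * int u - 1) ^ 2"
    by simp
  also have "\<dots> = 1 + 2 ^ Suc v * (int u * (2 ^ (w + 1) * int u - 1))"
    by (simp add: v power2_eq_square power_add algebra_simps)
  also have "\<dots> = int (1 + 2 ^ Suc v * u')"
    using pos by (simp add: u'_def of_nat_diff)
  finally have "a ^ 2 = 1 + 2 ^ Suc v * u'"
    by (simp only: of_nat_eq_iff)
  moreover have "odd u'"
    using assms(3) pos by (simp add: u'_def)
  ultimately show ?thesis
    by blast
qed

lemma cong_nat_iff_int_dvd: "[x = y] (mod n) \<longleftrightarrow> int n dvd int x - int y"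
  by (simp add: cong_int_iff[symmetric] cong_iff_dvd_diff)

lemma cong_Suc_pow2_add_odd:
  fixes x y t :: nat
  assumes "[x = y] (mod 2 ^ M)" "\<not> [x = y] (mod 2 ^ Suc M)" "odd t"
  shows "[x + 2 ^ M * t = y] (mod 2 ^ Suc M)"
proof -
  obtain e where e: "int x - int y = 2 ^ M * e"
    using assms(1) by (auto simp: cong_nat_iff_int_dvd)
  have "odd e"
  proof
    assume "even e"
    then have "int x - int y = 2 ^ Suc M * (e div 2)"
      using e by simp
    then show False
      using assms(2) by (simp add: cong_nat_iff_int_dvd)
  qed
  then obtain f where "e + int t = 2 * f"
    using assms(3) by (metis evenE odd_add even_of_nat)
  have "int (x + 2 ^ M * t) - int y = 2 ^ M * (e + int t)"
    using e by (simp add: algebra_simps)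
  also have "\<dots> = 2 ^ Suc M * f"
    using \<open>e + int t = 2 * f\<close> by simp
  finally show ?thesis
    by (simp add: cong_nat_iff_int_dvd)
qed

text \<open>Each step corrects one more binary digit: if \<open>c * b ^ k\<close> agrees with \<open>y\<close>
  modulo \<open>2 ^ M\<close> but not modulo \<open>2 ^ Suc M\<close>, multiplying by
  \<open>b ^ 2 ^ (M - v) = 1 + 2 ^ M * odd\<close> flips exactly the digit of weight \<open>2 ^ M\<close>.\<close>

lemma powers_reach_residue_class:
  fixes b c u v y :: nat
  assumes b: "b = 1 + 2 ^ v * u" "odd u" "v \<ge> 2"
    and c: "odd c" "[y = c] (mod 2 ^ v)"
    and "v \<le> M"
  shows "\<exists>k\<ge>K. [c * b ^ k = y] (mod 2 ^ M)"
  using \<open>v \<le> M\<close>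
proof (induction M rule: nat_induct_at_least)
  case base
  have "[b = 1] (mod 2 ^ v)"
    unfolding cong_def b(1) by (simp only: mod_mult_self2)
  then have "[c * b ^ K = c * 1 ^ K] (mod 2 ^ v)"
    by (intro cong_mult cong_refl cong_pow)
  then have "[c * b ^ K = y] (mod 2 ^ v)"
    using cong_sym[OF c(2)] by (simp add: cong_trans)
  then show ?case
    by blast
next
  case (Suc M)
  then obtain k where k: "k \<ge> K" "[c * b ^ k = y] (mod 2 ^ M)"
    by blast
  show ?case
  proof (cases "[c * b ^ k = y] (mod 2 ^ Suc M)")
    case True
    then show ?thesis
      using k(1) by blast
  next
    case False
    obtain t where t: "odd t" "b ^ (2 ^ (M - v)) = 1 + 2 ^ M * t"
      using power_pow2_one_plus_pow2[of v u "M - v"] b Suc.hyps by auto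
    have "c * b ^ (k + 2 ^ (M - v)) = c * b ^ k + 2 ^ M * (c * b ^ k * t)"
      by (simp add: power_add t(2) algebra_simps)
    moreover have "odd (c * b ^ k * t)"
      using b c(1) t(1) by simp
    ultimately have "[c * b ^ (k + 2 ^ (M - v)) = y] (mod 2 ^ Suc M)"
      using cong_Suc_pow2_add_odd[OF k(2) False] by simp
    then show ?thesis
      using k(1) by (intro exI[of _ "k + 2 ^ (M - v)"]) auto
  qed
qed

lemma adic_closure_eq_pi2_preimage:
  assumes "v \<ge> 1" "\<forall>r\<in>R. odd r" "S \<subseteq> pi2_preimage v R"
    and approx: "\<And>y M x. y \<in> pi2_preimage v R \<Longrightarrow> v \<le> M \<Longrightarrow> \<exists>s\<in>S. x \<le> s \<and> [s = y] (mod 2 ^ M)"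
  shows "adic_closure S = pi2_preimage v R"
proof (intro equalityI subsetI)
  fix y assume "y \<in> adic_closure S"
  then have "y \<ge> 1" and basic: "\<And>x m. x \<ge> 1 \<Longrightarrow> m \<ge> 1 \<Longrightarrow> y \<in> {x + 2 ^ m * k | k. True} \<Longrightarrow>
      \<exists>s\<in>S. s \<in> {x + 2 ^ m * k | k. True}"
    unfolding adic_closure_def by blast+
  have "y \<in> {y + 2 ^ v * k | k. True}"
    by (intro CollectI exI[of _ 0]) simp
  then obtain s k where "s \<in> S" "s = y + 2 ^ v * k"
    using basic[OF \<open>y \<ge> 1\<close> assms(1)] by blast
  then have "pi2 v y = pi2 v s" and "pi2 v s \<in> R"
    using assms(3) by (auto simp: pi2_def pi2_preimage_def)
  then show "y \<in> pi2_preimage v R"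
    using \<open>y \<ge> 1\<close> by (simp add: pi2_preimage_def)
next
  fix y assume y: "y \<in> pi2_preimage v R"
  then have "odd (pi2 v y)"
    using assms(2) by (simp add: pi2_preimage_def)
  then have "odd y"
    using assms(1) by (simp add: pi2_def flip: take_bit_eq_mod)
  show "y \<in> adic_closure S"
    unfolding adic_closure_def
  proof (intro CollectI conjI allI impI \<open>odd y\<close>)
    show "y \<ge> 1"
      using y by (simp add: pi2_preimage_def)
    fix x m assume "x \<ge> 1" "m \<ge> 1" "y \<in> {x + 2 ^ m * k | k. True}"
    then have "[y = x] (mod 2 ^ m)"
      by (auto simp: cong_def)
    obtain s where s: "s \<in> S" "x \<le> s" "[s = y] (mod 2 ^ max m v)"
      using approx[OF y, of "max m v" x] by auto
    have "[s = y] (mod 2 ^ m)"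
      using cong_dvd_modulus_nat[OF s(3)] by (simp add: le_imp_power_dvd)
    then have "[s = x] (mod 2 ^ m)"
      using \<open>[y = x] (mod 2 ^ m)\<close> by (rule cong_trans)
    then obtain k where "s = x + 2 ^ m * k"
      using cong_le_nat[OF s(2)] by (auto simp: ac_simps)
    then show "\<exists>s\<in>S. s \<in> {x + 2 ^ m * k | k. True}"
      using s(1) by blast
  qed
qed

lemma adic_closure_powers:
  fixes a u v :: nat
  assumes a: "a ^ 2 = 1 + 2 ^ v * u" "odd u" "v \<ge> 2"
  shows "adic_closure {a ^ k | k. k \<ge> 1} = pi2_preimage v {1, pi2 v a}"
proof (rule adic_closure_eq_pi2_preimage)
  have "odd (a ^ 2)"
    using a(1,3) by simp
  then have "odd a"
    by simp
  have "a \<noteq> 1"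
  proof
    assume "a = 1"
    then have "2 ^ v * u = 0"
      using a(1) by simp
    then show False
      using a(2) by simp
  qed
  then have "a \<ge> 2"
    using \<open>odd a\<close> by (cases a) auto
  then have large: "n \<le> a ^ n" for n
    using less_exp[of n] power_mono[of 2 a n] by linarith
  have pi2_one: "pi2 v 1 = 1"
    using a(3) one_less_power[of "2::nat" v] by (simp add: pi2_def)
  have even_power: "[a ^ (2 * j) = 1] (mod 2 ^ v)" for j
  proof -
    have "[a ^ 2 = 1] (mod 2 ^ v)"
      unfolding cong_def a(1) by (simp only: mod_mult_self2)
    then have "[(a ^ 2) ^ j = 1 ^ j] (mod 2 ^ v)"
      by (rule cong_pow)
    then show ?thesis
      by (simp add: power_mult)
  qed
  have odd_power: "[a ^ (2 * j + 1) = a] (mod 2 ^ v)" for j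
    using cong_mult[OF cong_refl[of a] even_power[of j]] by (simp add: mult.commute)
  show "v \<ge> 1"
    using a(3) by simp
  show "\<forall>r\<in>{1, pi2 v a}. odd r"
    using \<open>odd a\<close> \<open>v \<ge> 1\<close> by (simp add: pi2_def flip: take_bit_eq_mod)
  show "{a ^ k | k. k \<ge> 1} \<subseteq> pi2_preimage v {1, pi2 v a}"
  proof
    fix s assume "s \<in> {a ^ k | k. k \<ge> 1}"
    then obtain k where s: "s = a ^ k"
      by blast
    have "[a ^ k = 1] (mod 2 ^ v) \<or> [a ^ k = a] (mod 2 ^ v)"
      using even_power odd_power by (cases "even k") (auto elim!: evenE oddE)
    then have "pi2 v s = pi2 v 1 \<or> pi2 v s = pi2 v a"
      by (auto simp: s pi2_def cong_def)
    then have "pi2 v s \<in> {1, pi2 v a}"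
      using pi2_one by auto
    moreover have "s \<ge> 1"
      using \<open>a \<ge> 2\<close> by (simp add: s)
    ultimately show "s \<in> pi2_preimage v {1, pi2 v a}"
      by (simp add: pi2_preimage_def)
  qed
  fix y M x assume y: "y \<in> pi2_preimage v {1, pi2 v a}" and M: "v \<le> M"
  have "pi2 v y = pi2 v 1 \<or> pi2 v y = pi2 v a"
    using y pi2_one by (auto simp: pi2_preimage_def)
  then consider "[y = 1] (mod 2 ^ v)" | "[y = a] (mod 2 ^ v)"
    by (auto simp: pi2_def cong_def)
  then show "\<exists>s\<in>{a ^ k | k. k \<ge> 1}. x \<le> s \<and> [s = y] (mod 2 ^ M)"
  proof cases
    case 1
    then obtain k where k: "k \<ge> x + 1" "[1 * (a ^ 2) ^ k = y] (mod 2 ^ M)"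
      using powers_reach_residue_class[OF a _ 1 M, of "x + 1"] by auto
    have "a ^ (2 * k) \<in> {a ^ k | k. k \<ge> 1}"
      using k(1) by (intro CollectI exI[of _ "2 * k"]) simp
    moreover have "x \<le> a ^ (2 * k)"
      using large[of "2 * k"] k(1) by linarith
    moreover have "[a ^ (2 * k) = y] (mod 2 ^ M)"
      using k(2) by (simp add: power_mult)
    ultimately show ?thesis
      by blast
  next
    case 2
    then obtain k where k: "k \<ge> x" "[a * (a ^ 2) ^ k = y] (mod 2 ^ M)"
      using powers_reach_residue_class[OF a \<open>odd a\<close> 2 M, of x] by blast
    have "a ^ (2 * k + 1) \<in> {a ^ k | k. k \<ge> 1}"
      by (intro CollectI exI[of _ "2 * k + 1"]) simp
    moreover have "x \<le> a ^ (2 * k + 1)"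
      using large[of "2 * k + 1"] k(1) by linarith
    moreover have "[a ^ (2 * k + 1) = y] (mod 2 ^ M)"
      using k(2) by (simp add: power_mult)
    ultimately show ?thesis
      by blast
  qed
qed

lemma pi2_preimage_singleton:
  assumes "0 < r" "r < 2 ^ m"
  shows "pi2_preimage m {r} = {r + 2 ^ m * k | k. True}"
proof (intro equalityI subsetI)
  fix y assume "y \<in> pi2_preimage m {r}"
  then have "y mod 2 ^ m = r"
    by (simp add: pi2_preimage_def pi2_def)
  then have "y = r + 2 ^ m * (y div 2 ^ m)"
    using mod_mult_div_eq[of y "2 ^ m"] by simp
  then show "y \<in> {r + 2 ^ m * k | k. True}"
    by blast
qed (use assms in \<open>auto simp: pi2_preimage_def pi2_def\<close>)

lemma pi2_preimage_Suc_pair: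
  assumes "r < 2 ^ v"
  shows "pi2_preimage (Suc v) {r, r + 2 ^ v} = pi2_preimage v {r}"
proof -
  have split: "pi2 (Suc v) y = pi2 v y + 2 ^ v * (y div 2 ^ v mod 2)" for y
    using mod_mult2_eq[of y "2 ^ v" 2] by (simp add: pi2_def algebra_simps)
  have "pi2 (Suc v) y \<in> {r, r + 2 ^ v} \<longleftrightarrow> pi2 v y = r" for y
    using assms pi2_less[of v y] unfolding split by (auto simp: mod2_eq_if split: if_splits)
  then show ?thesis
    by (simp add: pi2_preimage_def)
qed

lemma pow2_mult_odd_decomposition:
  fixes n :: nat
  assumes "n \<noteq> 0" "4 dvd n"
  obtains v u where "n = 2 ^ v * u" "odd u" "v \<ge> 2"
proof -
  obtain u where "n = 2 ^ multiplicity 2 n * u" "\<not> 2 dvd u"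
    using multiplicity_decompose'[of n 2] assms(1) by auto
  moreover have "multiplicity 2 n \<ge> 2"
    using multiplicity_geI[of n 2 2] assms by simp
  ultimately show thesis
    using that by blast
qed

lemma adic_closure_powers_one_mod_four:
  fixes a u v :: nat
  assumes a: "a = 1 + 2 ^ v * u" "odd u" "v \<ge> 2"
  defines "X \<equiv> adic_closure {a ^ k | k. k \<ge> 1}"
  shows "X = {1 + 2 ^ v * k | k. True}" "nX X = v + 2" "iX X = 2 ^ (v - 1)"
proof -
  have lt: "1 + 2 ^ v < (2::nat) ^ Suc v"
    using a(3) one_less_power[of "2::nat" v] by simp
  obtain u' where "odd u'" "a ^ 2 = 1 + 2 ^ Suc v * u'"
    using square_one_plus_pow2[OF a(3,2)] a(1) by blast
  moreover have "pi2 (Suc v) a = 1 + 2 ^ v"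
  proof -
    obtain j where "u = 2 * j + 1"
      using a(2) oddE by blast
    then have "a = (1 + 2 ^ v) + 2 ^ Suc v * j"
      using a(1) by (simp add: algebra_simps)
    then show ?thesis
      using lt by (simp add: pi2_def)
  qed
  ultimately have X: "X = pi2_preimage (Suc v) {1, 1 + 2 ^ v}"
    unfolding X_def using adic_closure_powers[of a "Suc v" u'] a(3) by simp
  then show "nX X = v + 2" "iX X = 2 ^ (v - 1)"
    using nX_iX_pi2_preimage_pair[of "Suc v" "1 + 2 ^ v"] lt a(3) by simp_all
  have "X = pi2_preimage v {1}"
    unfolding X by (rule pi2_preimage_Suc_pair) (use lt in simp)
  also have "\<dots> = {1 + 2 ^ v * k | k. True}"
    by (rule pi2_preimage_singleton) (use lt in simp_all)
  finally show "X = {1 + 2 ^ v * k | k. True}" .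
qed

lemma adic_closure_powers_three_mod_four:
  fixes a u v :: nat
  assumes a: "a + 1 = 2 ^ v * u" "odd u" "v \<ge> 2"
  defines "X \<equiv> adic_closure {a ^ k | k. k \<ge> 1}"
  shows "X = {1 + 2 ^ Suc v * k | k. True} \<union> {2 ^ v - 1 + 2 ^ Suc v * k | k. True}"
    "nX X = v + 2" "iX X = 2 ^ (v - 1)"
proof -
  have lt: "2 ^ v - 1 < (2::nat) ^ Suc v"
    by (intro less_imp_diff_less) simp
  have gt: "1 < (2::nat) ^ v"
    using a(3) one_less_power[of "2::nat" v] by simp
  obtain u' where "odd u'" "a ^ 2 = 1 + 2 ^ Suc v * u'"
    using square_pred_pow2[OF a(1,3,2)] by blast
  moreover have "pi2 (Suc v) a = 2 ^ v - 1"
  proof -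
    obtain j where "u = 2 * j + 1"
      using a(2) oddE by blast
    then have "a + 1 = 2 ^ v + 2 ^ Suc v * j"
      using a(1) by (simp add: algebra_simps)
    then have "a = (2 ^ v - 1) + 2 ^ Suc v * j"
      using gt by linarith
    then show ?thesis
      using lt unfolding pi2_def by (simp only: mod_mult_self2 mod_less)
  qed
  ultimately have X: "X = pi2_preimage (Suc v) {1, 2 ^ v - 1}"
    unfolding X_def using adic_closure_powers[of a "Suc v" u'] a(3) by simp
  have "2 ^ v - 1 \<noteq> (1::nat)"
    using a(3) one_less_power[of "2::nat" "v - 1"] by (auto simp: power_diff)
  then show "nX X = v + 2" "iX X = 2 ^ (v - 1)"
    using nX_iX_pi2_preimage_pair[of "Suc v" "2 ^ v - 1"] lt a(3) by (simp_all add: X)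
  have one: "pi2_preimage (Suc v) {1} = {1 + 2 ^ Suc v * k | k. True}"
    by (rule pi2_preimage_singleton) (use gt in simp_all)
  have minus_one: "pi2_preimage (Suc v) {2 ^ v - 1} = {2 ^ v - 1 + 2 ^ Suc v * k | k. True}"
    by (rule pi2_preimage_singleton) (use gt lt in simp_all)
  have "X = pi2_preimage (Suc v) {1} \<union> pi2_preimage (Suc v) {2 ^ v - 1}"
    by (auto simp: X pi2_preimage_def)
  then show "X = {1 + 2 ^ Suc v * k | k. True} \<union> {2 ^ v - 1 + 2 ^ Suc v * k | k. True}"
    by (simp only: one minus_one)
qed

theorem lemma4p6:
  fixes a :: nat
  assumes "a \<ge> 1"
  defines "X \<equiv> adic_closure {a ^ k | k. k \<ge> 1}"
  shows "(a \<in> {1 + 4 * k | k. k \<ge> 1} \<longrightarrow>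
            X = {1 + 2 ^ (nX X - 2) * k | k. True} \<and> iX X = 2 ^ (nX X - 3))
       \<and> (a \<in> {3 + 4 * k | k. k \<ge> 1} \<longrightarrow>
            X = {1 + 2 ^ (nX X - 1) * k | k. True}
                \<union> {2 ^ (nX X - 2) - 1 + 2 ^ (nX X - 1) * k | k. True}
            \<and> iX X = 2 ^ (nX X - 3))"
proof (rule conjI[OF impI impI])
  assume "a \<in> {1 + 4 * k | k. k \<ge> 1}"
  then have "a - 1 \<noteq> 0" "4 dvd a - 1"
    by auto
  then obtain v u where "a - 1 = 2 ^ v * u" "odd u" "v \<ge> 2"
    by (rule pow2_mult_odd_decomposition)
  then have "a = 1 + 2 ^ v * u" "odd u" "v \<ge> 2"
    using \<open>a \<ge> 1\<close> by simp_all
  from adic_closure_powers_one_mod_four[OF this]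
  show "X = {1 + 2 ^ (nX X - 2) * k | k. True} \<and> iX X = 2 ^ (nX X - 3)"
    unfolding X_def by simp
next
  assume "a \<in> {3 + 4 * k | k. k \<ge> 1}"
  then have "a + 1 \<noteq> 0" "4 dvd a + 1"
    by auto
  then obtain v u where "a + 1 = 2 ^ v * u" "odd u" "v \<ge> 2"
    by (rule pow2_mult_odd_decomposition)
  from adic_closure_powers_three_mod_four[OF this]
  show "X = {1 + 2 ^ (nX X - 1) * k | k. True} \<union> {2 ^ (nX X - 2) - 1 + 2 ^ (nX X - 1) * k | k. True}
      \<and> iX X = 2 ^ (nX X - 3)"
    unfolding X_def by simp
qed

end
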